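(* If $b\mathbb S$ is a Hausdorff compactification of the Sorgenfrey line $\mathbb S$, then $b\mathbb S$ is not a continuous open image of the Sorgenfrey line.
   Context: $\mathbb S$ is $\mathbb R$ with the topology generated by $\{[a,b):a,b\in\mathbb R\}$; "continuous open image" means image under a continuous open surjection. *)

theory Defs
  imports "HOL-Analysis.Analysis"
begin

definition Sorgenfrey :: "real topology" where
  "Sorgenfrey = topology_generated_by {{a..<b} | a b. True}"

definition Hausdorff_compactification :: "'a topology \<Rightarrow> 'b topology \<Rightarrow> ('a \<Rightarrow> 'b) \<Rightarrow> bool" where
  "Hausdorff_compactification S X e \<longleftrightarrow>
     compact_space X \<and> Hausdorff_space X \<and> embedding_map S X e \<and>
     X closure_of (e ` topspace S) = topspace X"

end

theory Submission
  imports Defs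
begin

(*
  Let f map the Sorgenfrey line S continuously and openly onto a compactification bS of S, with S
  embedded by e. No nonempty open set of S has compact closure, and bS is locally compact, so no
  nonempty open set of bS lies inside e(S): the image of every interval contains points of the line
  and points off it.

  Sort each z by the position of f z relative to the line, measured by the closures upper x and
  lower x of the two halves e[x, oo) and e(-oo, x). Either f z = e x, and then by continuity f maps
  some [z, z + 1/(n+1)) into upper x; or f z sits at a cut c of the line, in upper x for x < c but
  with some [z, z + 1/(n+1)) mapped off upper c; or f z lies in the closed set of ends beyond both
  sides of the line. These countably many classes cover the reals, so by Baire one of them is dense
  in an interval I of length at most 1/(n+1). Each class is contradictory there: for a point class,
  the labels x of the nearby points increase to the right, so f takes a point of I off the line to
  e of their infimum; for a cut class, a point of I mapped onto the line is followed by one mapped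
  to e y' with y' beyond every cut c that can occur nearby; and the end class maps I into a closed
  set missing e(S), although f(I) meets e(S).
*)

section \<open>The Sorgenfrey line\<close>

lemma openin_Sorgenfrey: "openin Sorgenfrey U \<longleftrightarrow> (\<forall>x\<in>U. \<exists>d>0. {x..<x+d} \<subseteq> U)"
proof
  assume "openin Sorgenfrey U"
  then have "generate_topology_on {{a..<b} | a b. True} U"
    by (simp add: Sorgenfrey_def openin_topology_generated_by_iff)
  then show "\<forall>x\<in>U. \<exists>d>0. {x..<x+d} \<subseteq> U"
  proof (induction rule: generate_topology_on.induct)
    case (Int S T)
    show ?case
    proof
      fix x assume "x \<in> S \<inter> T"
      then obtain d1 d2 where d: "d1 > 0" "{x..<x+d1} \<subseteq> S" "d2 > 0" "{x..<x+d2} \<subseteq> T"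
        using Int.IH by blast
      have "{x..<x + min d1 d2} \<subseteq> {x..<x+d1}" "{x..<x + min d1 d2} \<subseteq> {x..<x+d2}" by auto
      then have "{x..<x + min d1 d2} \<subseteq> S \<inter> T" using d(2,4) by blast
      then show "\<exists>d>0. {x..<x+d} \<subseteq> S \<inter> T" using d(1,3) by (intro exI[of _ "min d1 d2"]) simp
    qed
  next
    case (Basis S)
    then obtain a b where "S = {a..<b}" by blast
    then show ?case by (auto intro!: exI[of _ "b - _"])
  qed blast+
next
  assume right_nbhds: "\<forall>x\<in>U. \<exists>d>0. {x..<x+d} \<subseteq> U"
  define \<B> :: "real set set" where "\<B> = {{a..<b} | a b. True}"
  have "U = \<Union>{I \<in> \<B>. I \<subseteq> U}"
  proof
    show "U \<subseteq> \<Union>{I \<in> \<B>. I \<subseteq> U}"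
    proof
      fix x assume "x \<in> U"
      then obtain d where "d > 0" "{x..<x+d} \<subseteq> U" using right_nbhds by blast
      then show "x \<in> \<Union>{I \<in> \<B>. I \<subseteq> U}"
        unfolding \<B>_def by (intro UnionI[of "{x..<x+d}"]) auto
    qed
  qed auto
  moreover have "generate_topology_on \<B> (\<Union>{I \<in> \<B>. I \<subseteq> U})"
    by (auto intro: generate_topology_on.UN generate_topology_on.Basis)
  ultimately show "openin Sorgenfrey U"
    by (simp add: Sorgenfrey_def openin_topology_generated_by_iff \<B>_def)
qed

lemma topspace_Sorgenfrey [simp]: "topspace Sorgenfrey = UNIV"
proof -
  have "openin Sorgenfrey UNIV"
    unfolding openin_Sorgenfrey by (auto intro: exI[of _ 1])
  then show ?thesis using openin_subset by blast
qed

lemma openin_Sorgenfrey_open: "open U \<Longrightarrow> openin Sorgenfrey U"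
  unfolding openin_Sorgenfrey open_dist
proof (intro ballI)
  fix x assume "\<forall>x\<in>U. \<exists>e>0. \<forall>y. dist y x < e \<longrightarrow> y \<in> U" "x \<in> U"
  then obtain e where "e > 0" "\<forall>y. dist y x < e \<longrightarrow> y \<in> U" by blast
  then show "\<exists>d>0. {x..<x+d} \<subseteq> U" by (intro exI[of _ e]) (auto simp: dist_real_def)
qed

lemma openin_Sorgenfrey_atLeastLessThan: "openin Sorgenfrey {a..<b}"
  unfolding openin_Sorgenfrey by (auto intro!: exI[of _ "b - _"])

lemma openin_Sorgenfrey_atLeast: "openin Sorgenfrey {a..}"
  unfolding openin_Sorgenfrey by (auto intro: exI[of _ 1])

lemma closedin_Sorgenfrey_atLeast: "closedin Sorgenfrey {a..}"
proof -
  have "openin Sorgenfrey {..<a}" by (simp add: openin_Sorgenfrey_open)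
  then show ?thesis by (simp add: closedin_def Compl_eq_Diff_UNIV[symmetric] Compl_atLeast)
qed

lemma closedin_Sorgenfrey_lessThan: "closedin Sorgenfrey {..<a}"
  using openin_Sorgenfrey_atLeast[of a]
  by (simp add: closedin_def Compl_eq_Diff_UNIV[symmetric] Compl_lessThan)

lemma closedin_Sorgenfrey_atLeastLessThan: "closedin Sorgenfrey {a..<b}"
proof -
  have "{a..<b} = {a..} \<inter> {..<b}" by auto
  then show ?thesis
    by (simp add: closedin_Int closedin_Sorgenfrey_atLeast closedin_Sorgenfrey_lessThan)
qed

lemma not_compactin_Sorgenfrey_atLeastLessThan:
  assumes "a < b" shows "\<not> compactin Sorgenfrey {a..<b}"
proof
  assume "compactin Sorgenfrey {a..<b}"
  moreover have "\<forall>I\<in>{{a..<t} | t. t < b}. openin Sorgenfrey I"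
    using openin_Sorgenfrey_atLeastLessThan by auto
  moreover have "{a..<b} \<subseteq> \<Union>{{a..<t} | t. t < b}"
    by (auto intro!: exI[of _ "(_ + b) / 2"])
  ultimately obtain \<F> where \<F>: "finite \<F>" "\<F> \<subseteq> {{a..<t} | t. t < b}" "{a..<b} \<subseteq> \<Union>\<F>"
    unfolding compactin_def by meson
  moreover have "{{a..<t} | t. t < b} = (\<lambda>t. {a..<t}) ` {..<b}" by auto
  ultimately have "\<exists>T\<subseteq>{..<b}. finite T \<and> \<F> = (\<lambda>t. {a..<t}) ` T"
    using finite_subset_image[of \<F> "\<lambda>t. {a..<t}" "{..<b}"] by simp
  then obtain T where T: "finite T" "T \<subseteq> {..<b}" "\<F> = (\<lambda>t. {a..<t}) ` T"
    by blast
  define m where "m = Max (insert a T)"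
  have "m < b" "a \<le> m"
    using T assms by (auto simp: m_def subset_eq)
  then have "(m + b) / 2 \<in> {a..<b}" by simp
  then obtain t where "t \<in> T" "(m + b) / 2 \<in> {a..<t}" using \<F>(3) T(3) by blast
  then have "(m + b) / 2 < t" by simp
  moreover have "t \<le> m" using T(1) \<open>t \<in> T\<close> by (simp add: m_def)
  moreover have "m < (m + b) / 2" using \<open>m < b\<close> by (simp add: field_simps)
  ultimately show False by simp
qed

lemma Sorgenfrey_openin_subset_compactin_empty:
  assumes "openin Sorgenfrey U" "compactin Sorgenfrey K" "U \<subseteq> K" shows "U = {}"
proof (rule ccontr)
  assume "U \<noteq> {}"
  then obtain a where "a \<in> U" by blast
  then obtain d where "d > 0" "{a..<a+d} \<subseteq> U" using assms(1) by (auto simp: openin_Sorgenfrey)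
  then have "compactin Sorgenfrey {a..<a+d}"
    using assms closed_compactin closedin_Sorgenfrey_atLeastLessThan by blast
  then show False using not_compactin_Sorgenfrey_atLeastLessThan \<open>d > 0\<close> by simp
qed

lemma continuous_map_Sorgenfrey_right_nbhd:
  assumes "continuous_map Sorgenfrey X g" "openin X V" "g z \<in> V"
  obtains d where "d > 0" "g ` {z..<z+d} \<subseteq> V"
proof -
  have "openin Sorgenfrey {x. g x \<in> V}"
    using openin_continuous_map_preimage[OF assms(1,2)] by simp
  then show ?thesis using assms(3) that unfolding openin_Sorgenfrey by blast
qed

lemma closure_subset_Sorgenfrey_closure_of:
  assumes "open T" "T \<subseteq> closure C" shows "T \<subseteq> Sorgenfrey closure_of C"
proof
  fix x assume "x \<in> T"
  show "x \<in> Sorgenfrey closure_of C"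
    unfolding in_closure_of
  proof (intro conjI allI impI)
    fix W assume "x \<in> W \<and> openin Sorgenfrey W"
    then obtain d where "d > 0" "{x..<x+d} \<subseteq> W" by (auto simp: openin_Sorgenfrey)
    obtain \<epsilon> where "\<epsilon> > 0" "ball x \<epsilon> \<subseteq> T" using assms(1) \<open>x \<in> T\<close> by (rule openE)
    define r where "r = min d \<epsilon>"
    have "{x<..<x+r} \<subseteq> ball x \<epsilon>" "{x<..<x+r} \<subseteq> {x..<x+d}"
      by (auto simp: r_def dist_real_def)
    then have sub: "{x<..<x+r} \<subseteq> T \<inter> W"
      using \<open>ball x \<epsilon> \<subseteq> T\<close> \<open>{x..<x+d} \<subseteq> W\<close> by blast
    have "r > 0" using \<open>d > 0\<close> \<open>\<epsilon> > 0\<close> by (simp add: r_def)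
    then have "x + r / 2 \<in> {x<..<x+r}" by simp
    then have "{x<..<x+r} \<inter> closure C \<noteq> {}" using sub assms(2) by blast
    then have "{x<..<x+r} \<inter> C \<noteq> {}" using open_Int_closure_eq_empty[of "{x<..<x+r}" C] by simp
    then obtain y where "y \<in> C" "y \<in> {x<..<x+r}" by blast
    then show "\<exists>y. y \<in> C \<and> y \<in> W" using sub by blast
  qed simp
qed

lemma ex_in_dense_interval:
  fixes a b u v :: real
  assumes "{a<..<b} \<subseteq> closure C" "a \<le> u" "u < v" "v \<le> b"
  obtains z where "z \<in> C" "u < z" "z < v"
proof -
  have "(u + v) / 2 \<in> {u<..<v}" "{u<..<v} \<subseteq> closure C"
    using assms by auto
  then have "{u<..<v} \<inter> closure C \<noteq> {}" by blast
  then show ?thesis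
    using that open_Int_closure_eq_empty[of "{u<..<v}" C] by auto
qed

lemma countable_cover_dense_in_interval:
  fixes \<C> :: "real set set"
  assumes "countable \<C>" "\<Union>\<C> = UNIV"
  obtains C a b where "C \<in> \<C>" "a < b" "{a<..<b} \<subseteq> closure C"
proof -
  have "\<exists>C\<in>\<C>. interior (closure C) \<noteq> {}"
  proof (rule ccontr)
    assume "\<not> ?thesis"
    then have "interior (\<Union>(closure ` \<C>)) = {}"
      using Baire_category_alt[of euclidean "closure ` \<C>"] assms(1)
      by (auto simp: completely_metrizable_space_euclidean)
    moreover have "\<Union>(closure ` \<C>) = UNIV"
      using assms(2) closure_subset by blast
    ultimately show False by simp
  qed
  then obtain C x where "C \<in> \<C>" "x \<in> interior (closure C)" by blast
  obtain \<epsilon> where "\<epsilon> > 0" "ball x \<epsilon> \<subseteq> interior (closure C)"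
    using open_interior \<open>x \<in> interior (closure C)\<close> by (rule openE)
  then have "ball x \<epsilon> \<subseteq> closure C" using interior_subset by blast
  then have "{x-\<epsilon><..<x+\<epsilon>} \<subseteq> closure C" by (simp add: ball_eq_greaterThanLessThan)
  moreover have "x - \<epsilon> < x + \<epsilon>" using \<open>\<epsilon> > 0\<close> by simp
  ultimately show ?thesis using that \<open>C \<in> \<C>\<close> by blast
qed

section \<open>Embeddings into compact Hausdorff spaces\<close>

lemma embedding_map_in_closure_of_image_iff:
  assumes "embedding_map S X e" "A \<subseteq> topspace S" "y \<in> topspace S"
  shows "e y \<in> X closure_of (e ` A) \<longleftrightarrow> y \<in> S closure_of A"
proof -
  let ?T = "e ` topspace S"
  have hom: "homeomorphic_map S (subtopology X ?T) e"
    using assms(1) by (simp add: embedding_map_def)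
  have "subtopology X ?T closure_of (e ` A) = ?T \<inter> X closure_of (e ` A)"
    by (simp only: closure_of_subtopology Int_absorb1[OF image_mono[OF assms(2)]])
  moreover have "subtopology X ?T closure_of (e ` A) = e ` (S closure_of A)"
    using homeomorphic_map_closure_of[OF hom assms(2)] .
  moreover have "inj_on e (topspace S)"
    using homeomorphic_imp_injective_map[OF hom] .
  ultimately show ?thesis
    using assms(3) inj_on_image_mem_iff[OF _ assms(3) closure_of_subset_topspace[of S A]] by blast
qed

text \<open>A compact Hausdorff space is locally compact, so an open set inside the image would pull
  back to an open set of \<open>S\<close> with compact closure.\<close>
lemma embedding_map_image_contains_no_openin:
  assumes "compact_space X" "Hausdorff_space X" "embedding_map S X e"
    and nowhere_locally_compact: "\<And>U K. openin S U \<Longrightarrow> compactin S K \<Longrightarrow> U \<subseteq> K \<Longrightarrow> U = {}"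
    and "openin X W" "W \<subseteq> e ` topspace S"
  shows "W = {}"
proof (rule ccontr)
  let ?T = "e ` topspace S"
  have hom: "homeomorphic_map S (subtopology X ?T) e"
    using assms(3) by (simp add: embedding_map_def)
  assume "W \<noteq> {}"
  then obtain y where y: "y \<in> topspace S" "e y \<in> W" using assms(6) by blast
  have "neighbourhood_base_of (closedin X) X"
    using assms(1,2) compact_Hausdorff_imp_regular_space neighbourhood_base_of_closedin by blast
  then have "\<exists>U K. openin X U \<and> closedin X K \<and> e y \<in> U \<and> U \<subseteq> K \<and> K \<subseteq> W"
    using assms(5) y(2) unfolding neighbourhood_base_of by simp
  then obtain U K where UK: "openin X U" "closedin X K" "e y \<in> U" "U \<subseteq> K" "K \<subseteq> W"
    by blast
  define K' where "K' = {x \<in> topspace S. e x \<in> K}"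
  define U' where "U' = {x \<in> topspace S. e x \<in> U}"
  have "e ` K' = K" using UK(5) assms(6) by (auto simp: K'_def)
  moreover have "compactin (subtopology X ?T) K"
    using UK(2,5) assms(1,6) closedin_compact_space by (auto simp: compactin_subtopology)
  ultimately have "compactin S K'"
    using homeomorphic_map_compactness_eq[OF hom] by (simp add: K'_def)
  moreover have "continuous_map S X e"
    using homeomorphic_imp_continuous_map[OF hom] continuous_map_in_subtopology by blast
  then have "openin S U'"
    unfolding U'_def using openin_continuous_map_preimage UK(1) by blast
  moreover have "U' \<subseteq> K'" using UK(4) by (auto simp: U'_def K'_def)
  ultimately have "U' = {}" using nowhere_locally_compact by blast
  then show False using y(1) UK(3) by (simp add: U'_def)
qed

lemma Hausdorff_space_eqI:
  assumes "Hausdorff_space X" "p \<in> topspace X" "q \<in> topspace X"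
    and "\<And>U V. openin X U \<Longrightarrow> openin X V \<Longrightarrow> p \<in> U \<Longrightarrow> q \<in> V \<Longrightarrow> U \<inter> V \<noteq> {}"
  shows "p = q"
  using assms unfolding Hausdorff_space_def disjnt_def by blast

section \<open>Open maps of the Sorgenfrey line onto a compactification\<close>

locale Sorgenfrey_open_image =
  fixes X :: "'a topology" and e f :: "real \<Rightarrow> 'a"
  assumes compactification: "Hausdorff_compactification Sorgenfrey X e"
    and f_continuous: "continuous_map Sorgenfrey X f"
    and f_open: "open_map Sorgenfrey X f"
    and f_onto: "range f = topspace X"
begin

lemma compact_X: "compact_space X"
  and Hausdorff_X: "Hausdorff_space X"
  and e_embedding: "embedding_map Sorgenfrey X e"
  and e_dense: "X closure_of range e = topspace X"
  using compactification by (simp_all add: Hausdorff_compactification_def)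

lemma e_continuous: "continuous_map Sorgenfrey X e"
  using e_embedding homeomorphic_imp_continuous_map continuous_map_in_subtopology
  unfolding embedding_map_def by blast

lemma e_inj: "inj e"
  using e_embedding homeomorphic_imp_injective_map unfolding embedding_map_def by fastforce

lemma e_in_topspace [simp]: "e y \<in> topspace X"
  using continuous_map_image_subset_topspace[OF e_continuous] by auto

lemma f_in_topspace [simp]: "f z \<in> topspace X"
  using f_onto by auto

lemma e_in_closure_of_image_iff:
  "closedin Sorgenfrey A \<Longrightarrow> e y \<in> X closure_of (e ` A) \<longleftrightarrow> y \<in> A"
  using embedding_map_in_closure_of_image_iff[OF e_embedding] by (simp add: closure_of_closedin)

lemma openin_subset_range_e_empty: "openin X W \<Longrightarrow> W \<subseteq> range e \<Longrightarrow> W = {}"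
  using embedding_map_image_contains_no_openin[OF compact_X Hausdorff_X e_embedding
      Sorgenfrey_openin_subset_compactin_empty] by simp

lemma image_interval_meets_range_e:
  assumes "a < b" obtains w y where "w \<in> {a<..<b}" "f w = e y"
proof -
  have "openin X (f ` {a<..<b})" "f ` {a<..<b} \<noteq> {}"
    using f_open assms openin_Sorgenfrey_open by (auto simp: open_map_def)
  then have "range e \<inter> f ` {a<..<b} \<noteq> {}" using e_dense dense_intersects_open by blast
  then obtain y where "e y \<in> f ` {a<..<b}" by blast
  then obtain w where "w \<in> {a<..<b}" "e y = f w" by (rule imageE)
  then show ?thesis using that[of w y] by simp
qed

lemma image_interval_leaves_range_e:
  assumes "a < b" obtains w where "w \<in> {a<..<b}" "f w \<notin> range e"
proof -
  have "openin X (f ` {a<..<b})" "f ` {a<..<b} \<noteq> {}"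
    using f_open assms openin_Sorgenfrey_open by (auto simp: open_map_def)
  then have "\<not> f ` {a<..<b} \<subseteq> range e" using openin_subset_range_e_empty by blast
  then show ?thesis using that by blast
qed

lemma image_point_moves_right:
  assumes "f w = e y" "w < b"
  obtains w' y' where "w < w'" "w' < b" "y < y'" "f w' = e y'"
proof -
  have "openin X (f ` {w..<b})"
    using f_open openin_Sorgenfrey_atLeastLessThan by (auto simp: open_map_def)
  moreover have "e y \<in> f ` {w..<b}" using assms by (metis atLeastLessThan_iff image_eqI order_refl)
  ultimately obtain \<eta> where "\<eta> > 0" "e ` {y..<y+\<eta>} \<subseteq> f ` {w..<b}"
    using continuous_map_Sorgenfrey_right_nbhd[OF e_continuous] by metis
  then have "e (y + \<eta>/2) \<in> f ` {w..<b}" by auto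
  then obtain w' where w': "w' \<in> {w..<b}" "f w' = e (y + \<eta>/2)" by (metis imageE)
  moreover have "w' \<noteq> w" using assms(1) w'(2) \<open>\<eta> > 0\<close> by (auto simp: inj_eq[OF e_inj])
  ultimately show ?thesis using that[of w' "y + \<eta>/2"] \<open>\<eta> > 0\<close> by auto
qed

definition upper :: "real \<Rightarrow> 'a set" where "upper x = X closure_of (e ` {x..})"
definition lower :: "real \<Rightarrow> 'a set" where "lower x = X closure_of (e ` {..<x})"

lemma closedin_upper: "closedin X (upper x)" and closedin_lower: "closedin X (lower x)"
  by (simp_all add: upper_def lower_def)

lemma e_in_upper_iff [simp]: "e y \<in> upper x \<longleftrightarrow> x \<le> y"
  by (simp add: upper_def e_in_closure_of_image_iff closedin_Sorgenfrey_atLeast)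

lemma e_in_lower_iff [simp]: "e y \<in> lower x \<longleftrightarrow> y < x"
  by (simp add: lower_def e_in_closure_of_image_iff closedin_Sorgenfrey_lessThan)

lemma upper_antimono: "x \<le> x' \<Longrightarrow> upper x' \<subseteq> upper x"
  unfolding upper_def by (intro closure_of_mono image_mono) auto

lemma upper_Un_lower: "upper x \<union> lower x = topspace X"
proof -
  have "{x..} \<union> {..<x} = (UNIV :: real set)" by auto
  then have "range e = e ` {x..} \<union> e ` {..<x}" by (metis image_Un)
  then show ?thesis using e_dense by (simp add: upper_def lower_def flip: closure_of_Un)
qed

lemma upper_limit_point_eq:
  assumes "p \<in> upper c" "\<And>x. c < x \<Longrightarrow> p \<notin> upper x"
  shows "p = e c"
proof (rule Hausdorff_space_eqI[OF Hausdorff_X])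
  show "p \<in> topspace X" using assms(1) closedin_upper closedin_subset by blast
  fix U V assume U: "openin X U" "p \<in> U" and V: "openin X V" "e c \<in> V"
  obtain \<eta> where "\<eta> > 0" "e ` {c..<c+\<eta>} \<subseteq> V"
    using continuous_map_Sorgenfrey_right_nbhd[OF e_continuous V] by metis
  have "openin X (U - upper (c+\<eta>))" "p \<in> U - upper (c+\<eta>)"
    using U assms(2) \<open>\<eta> > 0\<close> closedin_upper by auto
  then obtain t where "t \<in> {c..}" "e t \<in> U - upper (c+\<eta>)"
    using assms(1) unfolding upper_def in_closure_of by blast
  then have "e t \<in> U \<inter> V" using \<open>e ` {c..<c+\<eta>} \<subseteq> V\<close> by auto
  then show "U \<inter> V \<noteq> {}" by blast
qed simp

lemma f_right_nbhd_eventually: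
  assumes "openin X V" "f z \<in> V"
  shows "eventually (\<lambda>n. f ` {z..<z + inverse (real (Suc n))} \<subseteq> V) sequentially"
proof -
  obtain d where "d > 0" "f ` {z..<z+d} \<subseteq> V"
    using continuous_map_Sorgenfrey_right_nbhd[OF f_continuous assms] by metis
  have "eventually (\<lambda>n. inverse (real (Suc n)) < d) sequentially"
    using order_tendstoD(2)[OF LIMSEQ_inverse_real_of_nat \<open>d > 0\<close>] .
  then show ?thesis
  proof (rule eventually_mono)
    fix n assume "inverse (real (Suc n)) < d"
    then have "{z..<z + inverse (real (Suc n))} \<subseteq> {z..<z+d}" by auto
    then show "f ` {z..<z + inverse (real (Suc n))} \<subseteq> V" using \<open>f ` {z..<z+d} \<subseteq> V\<close> by blast
  qed
qed

text \<open>The bound \<open>- n \<le> x\<close> keeps the infimum over nearby points of a dense point class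
  bounded below.\<close>
definition point_class :: "nat \<Rightarrow> real set" where
  "point_class n = {z. \<exists>x. - real n \<le> x \<and> f z = e x \<and>
     f ` {z..<z + inverse (real (Suc n))} \<subseteq> upper x}"

definition cut_class :: "nat \<Rightarrow> real set" where
  "cut_class n = {z. \<exists>c. (\<forall>x<c. f z \<in> upper x) \<and>
     f ` {z..<z + inverse (real (Suc n))} \<inter> upper c = {}}"

definition ends :: "'a set" where "ends = (\<Inter>x. lower x) \<union> (\<Inter>x. upper x)"

definition end_class :: "real set" where "end_class = {z. f z \<in> ends}"

lemma in_point_class:
  assumes "f z = e x" shows "\<exists>n. z \<in> point_class n"
proof -
  have "openin X (topspace X - lower x)" using closedin_lower by blast
  moreover have "f z \<in> topspace X - lower x" using assms by simp
  moreover have "topspace X - lower x \<subseteq> upper x" using upper_Un_lower[of x] by blast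
  ultimately have "eventually (\<lambda>n. f ` {z..<z + inverse (real (Suc n))} \<subseteq> upper x) sequentially"
    using f_right_nbhd_eventually by (blast intro: eventually_mono)
  moreover obtain N where "- x \<le> real N" using real_arch_simple by blast
  then have "eventually (\<lambda>n. - real n \<le> x) sequentially"
    by (auto simp: eventually_sequentially intro!: exI[of _ N])
  ultimately obtain n where "f ` {z..<z + inverse (real (Suc n))} \<subseteq> upper x" "- real n \<le> x"
    using eventually_happens'[OF sequentially_bot eventually_conj] by blast
  then show ?thesis using assms by (auto simp: point_class_def)
qed

lemma cut_exists:
  assumes "p \<notin> range e" "p \<in> upper x0" "p \<notin> upper x1"
  obtains c where "\<And>x. x < c \<Longrightarrow> p \<in> upper x" "p \<notin> upper c"
proof
  define D where "D = {x. p \<in> upper x}"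
  have "x0 \<in> D" using assms(2) by (simp add: D_def)
  have "x < x1" if "x \<in> D" for x
    using that assms(3) upper_antimono[of x1 x] by (force simp: D_def)
  then have "bdd_above D" by (meson bdd_aboveI less_imp_le)
  show "p \<in> upper x" if "x < Sup D" for x
  proof -
    obtain x' where "x' \<in> D" "x < x'" using less_cSupD[OF _ \<open>x < Sup D\<close>] \<open>x0 \<in> D\<close> by blast
    then show ?thesis using upper_antimono[of x x'] by (auto simp: D_def)
  qed
  show "p \<notin> upper (Sup D)"
  proof
    assume "p \<in> upper (Sup D)"
    moreover have "p \<notin> upper x" if "Sup D < x" for x
      using that cSup_upper[OF _ \<open>bdd_above D\<close>, of x] by (force simp: D_def)
    ultimately have "p = e (Sup D)" by (rule upper_limit_point_eq)
    then show False using assms(1) by simp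
  qed
qed

lemma in_cut_class:
  assumes "f z \<notin> range e" "f z \<in> upper x0" "f z \<notin> upper x1"
  shows "\<exists>n. z \<in> cut_class n"
proof -
  obtain c where c: "\<And>x. x < c \<Longrightarrow> f z \<in> upper x" "f z \<notin> upper c"
    using cut_exists[OF assms] by metis
  have "openin X (topspace X - upper c)" using closedin_upper by blast
  then have "eventually (\<lambda>n. f ` {z..<z + inverse (real (Suc n))} \<subseteq> topspace X - upper c)
      sequentially"
    using c(2) by (intro f_right_nbhd_eventually) auto
  then obtain n where "f ` {z..<z + inverse (real (Suc n))} \<subseteq> topspace X - upper c"
    using eventually_happens'[OF sequentially_bot] by blast
  then show ?thesis using c(1) by (auto simp: cut_class_def)
qed

lemma classes_cover: "z \<in> end_class \<or> (\<exists>n. z \<in> point_class n) \<or> (\<exists>n. z \<in> cut_class n)"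
proof (cases "f z \<in> range e")
  case True
  then show ?thesis using in_point_class by blast
next
  case False
  show ?thesis
  proof (cases "f z \<in> ends")
    case True
    then show ?thesis by (simp add: end_class_def)
  next
    case False
    then obtain x0 x1 where "f z \<notin> lower x0" "f z \<notin> upper x1" by (auto simp: ends_def)
    moreover have "f z \<in> upper x0 \<union> lower x0" using upper_Un_lower by simp
    ultimately show ?thesis using in_cut_class \<open>f z \<notin> range e\<close> by blast
  qed
qed

lemma end_class_nowhere_dense:
  assumes "a < b" "{a<..<b} \<subseteq> closure C" "C \<subseteq> end_class"
  shows False
proof -
  obtain w y where w: "w \<in> {a<..<b}" "f w = e y"
    using image_interval_meets_range_e[OF assms(1)] .
  have "w \<in> Sorgenfrey closure_of C"
    using closure_subset_Sorgenfrey_closure_of[OF _ assms(2)] w(1) by auto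
  then have "f w \<in> X closure_of (f ` C)"
    using continuous_map_image_closure_subset[OF f_continuous] by blast
  moreover have "X closure_of (f ` C) \<subseteq> ends"
  proof (rule closure_of_minimal)
    show "f ` C \<subseteq> ends" using assms(3) by (auto simp: end_class_def)
    show "closedin X ends"
      by (auto simp: ends_def intro!: closedin_Un closedin_Inter closedin_upper closedin_lower)
  qed
  ultimately have "e y \<in> ends" using w(2) by auto
  moreover have "\<exists>x. \<not> y < x" "\<exists>x. \<not> x \<le> y" by (auto intro: exI[of _ y] exI[of _ "y + 1"])
  ultimately show False by (auto simp: ends_def)
qed

lemma point_class_label:
  assumes "z \<in> point_class n"
  shows "- real n \<le> inv e (f z)" "f z = e (inv e (f z))"
    and "f ` {z..<z + inverse (real (Suc n))} \<subseteq> upper (inv e (f z))"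
proof -
  obtain x where "- real n \<le> x" "f z = e x" "f ` {z..<z + inverse (real (Suc n))} \<subseteq> upper x"
    using assms unfolding point_class_def by blast
  moreover have "inv e (f z) = x" using \<open>f z = e x\<close> by (simp add: inv_f_f[OF e_inj])
  ultimately show "- real n \<le> inv e (f z)" "f z = e (inv e (f z))"
    and "f ` {z..<z + inverse (real (Suc n))} \<subseteq> upper (inv e (f z))" by auto
qed

lemma point_class_label_mono:
  assumes "z \<in> point_class n" "z' \<in> point_class n" "z \<le> z'" "z' < z + inverse (real (Suc n))"
  shows "inv e (f z) \<le> inv e (f z')"
proof -
  have "f z' \<in> upper (inv e (f z))" using point_class_label(3)[OF assms(1)] assms(3,4) by auto
  then have "e (inv e (f z')) \<in> upper (inv e (f z))" using point_class_label(2)[OF assms(2)] by simp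
  then show ?thesis by simp
qed

lemma point_class_nowhere_dense:
  assumes "a < b" "{a<..<b} \<subseteq> closure C" "C \<subseteq> point_class n"
  shows False
proof -
  define b' where "b' = min b (a + inverse (real (Suc n)))"
  define g where "g z = inv e (f z)" for z
  have "a < b'" using assms(1) by (simp add: b'_def)
  then obtain w where w: "w \<in> {a<..<b'}" "f w \<notin> range e"
    by (rule image_interval_leaves_range_e)
  define Z where "Z = C \<inter> {w<..<b'}"
  have "a \<le> w" "w < b'" "b' \<le> b" using w(1) by (auto simp: b'_def)
  then obtain z0 where "z0 \<in> C" "w < z0" "z0 < b'" by (rule ex_in_dense_interval[OF assms(2)])
  then have "Z \<noteq> {}" by (auto simp: Z_def)
  have "bdd_below (g ` Z)"
    using point_class_label(1) assms(3) by (auto simp: Z_def g_def intro!: bdd_belowI[of _ "- real n"])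
  have g_mono: "g z \<le> g z'" if "z \<in> Z" "z' \<in> Z" "z \<le> z'" for z z'
  proof -
    have "z' < z + inverse (real (Suc n))" using that w(1) by (auto simp: Z_def b'_def)
    then show ?thesis
      using point_class_label_mono[of z n z'] that assms(3) by (auto simp: Z_def g_def)
  qed
  define c where "c = Inf (g ` Z)"
  have "f w = e c"
  proof (rule Hausdorff_space_eqI[OF Hausdorff_X])
    fix U V assume U: "openin X U" "f w \<in> U" and V: "openin X V" "e c \<in> V"
    obtain d where "d > 0" "f ` {w..<w+d} \<subseteq> U"
      using continuous_map_Sorgenfrey_right_nbhd[OF f_continuous U] by metis
    obtain \<eta> where "\<eta> > 0" "e ` {c..<c+\<eta>} \<subseteq> V"
      using continuous_map_Sorgenfrey_right_nbhd[OF e_continuous V] by metis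
    obtain z1 where "z1 \<in> Z" "g z1 < c + \<eta>"
      using cInf_lessD[of "g ` Z" "c + \<eta>"] \<open>Z \<noteq> {}\<close> \<open>\<eta> > 0\<close> by (auto simp: c_def)
    then have "a \<le> w" "w < min z1 (w + d)" "min z1 (w + d) \<le> b"
      using w(1) \<open>d > 0\<close> by (auto simp: Z_def b'_def)
    then obtain z where z: "z \<in> C" "w < z" "z < min z1 (w + d)"
      by (rule ex_in_dense_interval[OF assms(2)])
    then have "z \<in> Z" using \<open>z1 \<in> Z\<close> by (auto simp: Z_def)
    then have "c \<le> g z" "g z \<le> g z1"
      using cInf_lower[OF _ \<open>bdd_below (g ` Z)\<close>] g_mono \<open>z1 \<in> Z\<close> z(3) by (auto simp: c_def)
    then have "g z \<in> {c..<c+\<eta>}" using \<open>g z1 < c + \<eta>\<close> by simp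
    moreover have "f z = e (g z)" using point_class_label(2) z(1) assms(3) by (auto simp: g_def)
    ultimately have "f z \<in> V" using \<open>e ` {c..<c+\<eta>} \<subseteq> V\<close> by auto
    moreover have "f z \<in> U" using \<open>f ` {w..<w+d} \<subseteq> U\<close> z(2,3) by auto
    ultimately show "U \<inter> V \<noteq> {}" by blast
  qed simp_all
  then show False using w(2) by simp
qed

lemma cut_class_nowhere_dense:
  assumes "a < b" "{a<..<b} \<subseteq> closure C" "C \<subseteq> cut_class n"
  shows False
proof -
  define \<delta> where "\<delta> = inverse (real (Suc n))"
  define b' where "b' = min b (a + \<delta>)"
  have "a < b'" using assms(1) by (simp add: b'_def \<delta>_def)
  then obtain w y where w: "w \<in> {a<..<b'}" "f w = e y"
    by (rule image_interval_meets_range_e)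
  obtain w' y' where w': "w < w'" "w' < b'" "y < y'" "f w' = e y'"
    using image_point_moves_right[OF w(2)] w(1) by auto
  define y'' where "y'' = (y + y') / 2"
  have "openin X (topspace X - upper y'')" using closedin_upper by blast
  moreover have "f w \<in> topspace X - upper y''" using w(2) w'(3) by (simp add: y''_def)
  ultimately obtain d where "d > 0" "f ` {w..<w+d} \<subseteq> topspace X - upper y''"
    using continuous_map_Sorgenfrey_right_nbhd[OF f_continuous] by metis
  have "a \<le> w" "w < min w' (w + d)" "min w' (w + d) \<le> b"
    using w(1) w'(1,2) \<open>d > 0\<close> by (auto simp: b'_def)
  then obtain z where z: "z \<in> C" "w < z" "z < min w' (w + d)"
    by (rule ex_in_dense_interval[OF assms(2)])
  have "z \<in> cut_class n" using z(1) assms(3) by blast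
  then obtain c where c: "\<And>x. x < c \<Longrightarrow> f z \<in> upper x" "f ` {z..<z+\<delta>} \<inter> upper c = {}"
    unfolding cut_class_def \<delta>_def by blast
  have "z \<in> {w..<w+d}" using z(2,3) by simp
  then have "f z \<notin> upper y''" using \<open>f ` {w..<w+d} \<subseteq> _\<close> by blast
  then have "c \<le> y''" using c(1) by (meson not_le)
  then have "e y' \<in> upper c" using w'(3) by (simp add: y''_def)
  moreover have "w' \<in> {z..<z+\<delta>}" using z w(1) w'(2) by (auto simp: b'_def)
  then have "e y' \<in> f ` {z..<z+\<delta>}" using w'(4) by (metis imageI)
  ultimately show False using c(2) by blast
qed

lemma impossible: False
proof -
  define \<C> where "\<C> = insert end_class (range point_class \<union> range cut_class)"
  have "countable \<C>" by (simp add: \<C>_def)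
  moreover have "z \<in> \<Union>\<C>" for z using classes_cover[of z] by (auto simp: \<C>_def)
  then have "\<Union>\<C> = UNIV" by blast
  ultimately obtain C a b where C: "C \<in> \<C>" "a < b" "{a<..<b} \<subseteq> closure C"
    by (rule countable_cover_dense_in_interval)
  from C(1) consider "C = end_class" | n where "C = point_class n" | n where "C = cut_class n"
    by (auto simp: \<C>_def)
  then show False
  proof cases
    case 1
    then show False using end_class_nowhere_dense[OF C(2,3)] by simp
  next
    case (2 n)
    then show False using point_class_nowhere_dense[OF C(2,3), of n] by simp
  next
    case (3 n)
    then show False using cut_class_nowhere_dense[OF C(2,3), of n] by simp
  qed
qed

end

theorem mainTheorem15:
  fixes X :: "'a topology" and e :: "real \<Rightarrow> 'a"
  assumes "Hausdorff_compactification Sorgenfrey X e"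
  shows "\<not> (\<exists>f. continuous_map Sorgenfrey X f \<and> open_map Sorgenfrey X f \<and>
               f ` topspace Sorgenfrey = topspace X)"
proof
  assume "\<exists>f. continuous_map Sorgenfrey X f \<and> open_map Sorgenfrey X f \<and>
               f ` topspace Sorgenfrey = topspace X"
  then obtain f where "continuous_map Sorgenfrey X f" "open_map Sorgenfrey X f"
    "range f = topspace X" by auto
  then interpret Sorgenfrey_open_image X e f
    using assms by unfold_locales
  show False by (rule impossible)
qed

end
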